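(* Let $\mathcal Y$ be a finite set, let $R$ be a probability measure on $\mathcal Y$ with $r(y)=R(\{y\})>0$ for all $y$, and let $p,q:\mathcal Y\to(0,\infty)$ be the densities with respect to $R$ of probability measures $P,Q$ on $\mathcal Y$. For $\gamma\notin\{0,-1\}$ define $$D_\gamma(P,Q;R)=-\frac1\gamma\frac{\sum_{y} p(y)q(y)^\gamma r(y)}{\big(\sum_y q(y)^{\gamma+1}r(y)\big)^{\gamma/(\gamma+1)}}+\frac1\gamma\Big(\sum_y p(y)^{\gamma+1}r(y)\Big)^{1/(\gamma+1)},$$ and define the GM-divergence $$D_{\rm GM}(P,Q;R)=\Big(\sum_y\frac{p(y)}{q(y)}r(y)\Big)\exp\Big\{\sum_y r(y)\log q(y)\Big\}-\exp\Big\{\sum_y r(y)\log p(y)\Big\}.$$ Then $\lim_{\gamma\to-1}D_\gamma(P,Q;R)=D_{\rm GM}(P,Q;R)$. *)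

theory Defs
  imports "HOL-Analysis.Analysis"
begin

definition gamma_div :: "'a set \<Rightarrow> ('a \<Rightarrow> real) \<Rightarrow> ('a \<Rightarrow> real) \<Rightarrow> ('a \<Rightarrow> real) \<Rightarrow> real \<Rightarrow> real" where
  "gamma_div Y r p q \<gamma> =
     - (1 / \<gamma>) * (\<Sum>y\<in>Y. p y * q y powr \<gamma> * r y)
         / (\<Sum>y\<in>Y. q y powr (\<gamma> + 1) * r y) powr (\<gamma> / (\<gamma> + 1))
     + (1 / \<gamma>) * (\<Sum>y\<in>Y. p y powr (\<gamma> + 1) * r y) powr (1 / (\<gamma> + 1))"

definition GM_div :: "'a set \<Rightarrow> ('a \<Rightarrow> real) \<Rightarrow> ('a \<Rightarrow> real) \<Rightarrow> ('a \<Rightarrow> real) \<Rightarrow> real" where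
  "GM_div Y r p q =
     (\<Sum>y\<in>Y. p y / q y * r y) * exp (\<Sum>y\<in>Y. r y * ln (q y))
     - exp (\<Sum>y\<in>Y. r y * ln (p y))"

end

theory Submission
  imports Defs
begin

text \<open>Writing \<open>t = \<gamma> + 1\<close>, the \<open>\<gamma>\<close>-divergence combines the weighted power means of order \<open>t\<close>
  of \<open>p\<close> and \<open>q\<close> with factors that are continuous at \<open>\<gamma> = -1\<close>. As \<open>t \<rightarrow> 0\<close> a power mean tends
  to the geometric mean: \<open>ln (\<Sum>y. f y powr t * r y)\<close> vanishes at \<open>t = 0\<close>, so divided by \<open>t\<close>
  it tends to its derivative there, which is \<open>\<Sum>y. r y * ln (f y)\<close>.\<close>

lemma tendsto_powr_reciprocal_exp_deriv:
  fixes S :: "real \<Rightarrow> real"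
  assumes deriv: "(S has_real_derivative D) (at 0)" and S0: "S 0 = 1"
  shows "((\<lambda>t. S t powr (1 / t)) \<longlongrightarrow> exp D) (at 0)"
proof -
  have "((\<lambda>t. ln (S t)) has_real_derivative D) (at 0)"
    using deriv S0 by (auto intro!: derivative_eq_intros)
  then have "((\<lambda>t. ln (S t) / t) \<longlongrightarrow> D) (at 0)"
    using S0 by (simp add: has_field_derivative_iff)
  then have "((\<lambda>t. exp (ln (S t) / t)) \<longlongrightarrow> exp D) (at 0)"
    by (rule tendsto_exp)
  moreover have "\<forall>\<^sub>F t in at 0. exp (ln (S t) / t) = S t powr (1 / t)"
  proof -
    have "(S \<longlongrightarrow> 1) (at 0)"
      using DERIV_isCont[OF deriv] S0 by (simp add: isCont_def)
    then have "\<forall>\<^sub>F t in at 0. S t > 0"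
      by (rule order_tendstoD) simp
    then show ?thesis
      by eventually_elim (simp add: powr_def)
  qed
  ultimately show ?thesis
    by (rule Lim_transform_eventually)
qed

definition power_mean :: "'a set \<Rightarrow> ('a \<Rightarrow> real) \<Rightarrow> ('a \<Rightarrow> real) \<Rightarrow> real \<Rightarrow> real" where
  "power_mean Y r f t = (\<Sum>y\<in>Y. f y powr t * r y) powr (1 / t)"

definition geometric_mean :: "'a set \<Rightarrow> ('a \<Rightarrow> real) \<Rightarrow> ('a \<Rightarrow> real) \<Rightarrow> real" where
  "geometric_mean Y r f = exp (\<Sum>y\<in>Y. r y * ln (f y))"

lemma power_mean_tendsto_geometric_mean:
  fixes Y :: "'a set" and r f :: "'a \<Rightarrow> real"
  assumes "finite Y" and "(\<Sum>y\<in>Y. r y) = 1" and f_pos: "\<And>y. y \<in> Y \<Longrightarrow> f y > 0"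
  shows "(power_mean Y r f \<longlongrightarrow> geometric_mean Y r f) (at 0)"
  unfolding power_mean_def geometric_mean_def
proof (rule tendsto_powr_reciprocal_exp_deriv)
  have "((\<lambda>t. \<Sum>y\<in>Y. f y powr t * r y) has_real_derivative (\<Sum>y\<in>Y. ln (f y) * f y powr 0 * r y)) (at 0)"
    using f_pos by (auto intro!: derivative_eq_intros)
  also have "(\<Sum>y\<in>Y. ln (f y) * f y powr 0 * r y) = (\<Sum>y\<in>Y. r y * ln (f y))"
    by (intro sum.cong) (auto dest: f_pos)
  finally show "((\<lambda>t. \<Sum>y\<in>Y. f y powr t * r y) has_real_derivative (\<Sum>y\<in>Y. r y * ln (f y))) (at 0)" .
  have "(\<Sum>y\<in>Y. f y powr 0 * r y) = (\<Sum>y\<in>Y. r y)"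
    by (intro sum.cong) (auto dest: f_pos)
  then show "(\<Sum>y\<in>Y. f y powr 0 * r y) = 1"
    using assms(2) by simp
qed

lemma gamma_div_eq_power_means:
  fixes Y :: "'a set" and r p q :: "'a \<Rightarrow> real"
  assumes "\<gamma> \<noteq> -1" and r_nonneg: "\<And>y. y \<in> Y \<Longrightarrow> r y \<ge> 0"
  shows "gamma_div Y r p q \<gamma> =
           - (1 / \<gamma>) * (\<Sum>y\<in>Y. p y * q y powr \<gamma> * r y) * power_mean Y r q (\<gamma> + 1)
               / (\<Sum>y\<in>Y. q y powr (\<gamma> + 1) * r y)
           + (1 / \<gamma>) * power_mean Y r p (\<gamma> + 1)"
proof -
  define B where "B = (\<Sum>y\<in>Y. q y powr (\<gamma> + 1) * r y)"
  have "B \<ge> 0"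
    unfolding B_def by (intro sum_nonneg mult_nonneg_nonneg) (auto dest: r_nonneg)
  have "\<gamma> / (\<gamma> + 1) = 1 - 1 / (\<gamma> + 1)"
    using assms(1) by (simp add: field_simps)
  then have "B powr (\<gamma> / (\<gamma> + 1)) = B / B powr (1 / (\<gamma> + 1))"
    using \<open>B \<ge> 0\<close> by (simp add: powr_diff)
  then show ?thesis
    unfolding gamma_div_def power_mean_def B_def[symmetric] by simp
qed

theorem mainTheorem3:
  fixes Y :: "'a set" and r p q :: "'a \<Rightarrow> real"
  assumes "finite Y"
    and "\<And>y. y \<in> Y \<Longrightarrow> r y > 0" and "(\<Sum>y\<in>Y. r y) = 1"
    and "\<And>y. y \<in> Y \<Longrightarrow> p y > 0" and "(\<Sum>y\<in>Y. p y * r y) = 1"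
    and "\<And>y. y \<in> Y \<Longrightarrow> q y > 0" and "(\<Sum>y\<in>Y. q y * r y) = 1"
  shows "((\<lambda>\<gamma>. gamma_div Y r p q \<gamma>) \<longlongrightarrow> GM_div Y r p q) (at (-1))"
proof -
  note fin = assms(1) and r_pos = assms(2) and r_sum = assms(3) and p_pos = assms(4)
    and q_pos = assms(6)
  have mean: "((\<lambda>\<gamma>. power_mean Y r f (\<gamma> + 1)) \<longlongrightarrow> geometric_mean Y r f) (at (-1))"
    if "\<And>y. y \<in> Y \<Longrightarrow> f y > 0" for f
    using power_mean_tendsto_geometric_mean[OF fin r_sum that]
    by (simp add: LIM_offset_zero_iff[of "-1::real"])
  have "((\<lambda>\<gamma>. \<Sum>y\<in>Y. p y * q y powr \<gamma> * r y)
          \<longlongrightarrow> (\<Sum>y\<in>Y. p y * q y powr -1 * r y)) (at (-1))" (is "(?cross \<longlongrightarrow> _) _")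
    by (intro tendsto_intros) (auto dest: q_pos)
  also have "(\<Sum>y\<in>Y. p y * q y powr -1 * r y) = (\<Sum>y\<in>Y. p y / q y * r y)"
    by (intro sum.cong) (auto simp: powr_minus_divide dest: q_pos)
  finally have cross_sum: "(?cross \<longlongrightarrow> (\<Sum>y\<in>Y. p y / q y * r y)) (at (-1))" .
  have "((\<lambda>\<gamma>. \<Sum>y\<in>Y. q y powr (\<gamma> + 1) * r y)
          \<longlongrightarrow> (\<Sum>y\<in>Y. q y powr (-1 + 1) * r y)) (at (-1))" (is "(?q_sum \<longlongrightarrow> _) _")
    by (intro tendsto_intros) (auto dest: q_pos)
  also have "(\<Sum>y\<in>Y. q y powr (-1 + 1) * r y) = 1"
    using r_sum by (simp cong: sum.cong add: less_imp_neq[OF q_pos, symmetric])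
  finally have q_sum: "(?q_sum \<longlongrightarrow> 1) (at (-1))" .
  have "((\<lambda>\<gamma>. - (1 / \<gamma>) * (\<Sum>y\<in>Y. p y * q y powr \<gamma> * r y) * power_mean Y r q (\<gamma> + 1)
               / (\<Sum>y\<in>Y. q y powr (\<gamma> + 1) * r y) + (1 / \<gamma>) * power_mean Y r p (\<gamma> + 1))
        \<longlongrightarrow> - (1 / -1) * (\<Sum>y\<in>Y. p y / q y * r y) * geometric_mean Y r q / 1
            + (1 / -1) * geometric_mean Y r p) (at (-1))" (is "(?rewritten \<longlongrightarrow> _) _")
    by (intro tendsto_intros cross_sum q_sum mean p_pos q_pos) auto
  then have "(?rewritten \<longlongrightarrow> GM_div Y r p q) (at (-1))"
    by (simp add: GM_div_def geometric_mean_def)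
  then show ?thesis
    by (rule Lim_transform_eventually)
      (auto simp: eventually_at_filter gamma_div_eq_power_means less_imp_le r_pos)
qed

end
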